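(* Let $q$ be a prime power and $n\in\{q-1,q,q+1\}$. Then any two linear $(n,q^{n-2},3)_q$ codes over $\mathbb{F}_q$ are equivalent.
   Context: An $(n,M,d)_q$ code over $\mathbb{F}_q$ is a subset of $\mathbb{F}_q^n$ with $M$ elements and minimum Hamming distance $d$; it is linear if it is an $\mathbb{F}_q$-subspace. Two codes of length $n$ are equivalent if one can be obtained from the other by a permutation of the coordinates followed by a permutation of the symbols of $\mathbb{F}_q$ in each coordinate separately (possibly different permutations in different coordinates). *)

theory Defs
  imports Main "HOL-Computational_Algebra.Primes" "HOL-Combinatorics.Permutations" "HOL-Library.Cardinality"
begin

definition words :: "nat \<Rightarrow> 'a list set" where
  "words n = {x. length x = n}"

definition hamming_dist :: "'a list \<Rightarrow> 'a list \<Rightarrow> nat" where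
  "hamming_dist x y = card {i. i < length x \<and> x ! i \<noteq> y ! i}"

definition is_code :: "nat \<Rightarrow> nat \<Rightarrow> nat \<Rightarrow> 'a list set \<Rightarrow> bool" where
  "is_code n M d C \<longleftrightarrow> C \<subseteq> words n \<and> finite C \<and> card C = M \<and>
     (\<forall>x\<in>C. \<forall>y\<in>C. x \<noteq> y \<longrightarrow> d \<le> hamming_dist x y) \<and>
     (\<exists>x\<in>C. \<exists>y\<in>C. x \<noteq> y \<and> hamming_dist x y = d)"

definition linear_code :: "nat \<Rightarrow> 'a::field list set \<Rightarrow> bool" where
  "linear_code n C \<longleftrightarrow> C \<subseteq> words n \<and> replicate n 0 \<in> C \<and>
     (\<forall>x\<in>C. \<forall>y\<in>C. map2 (+) x y \<in> C) \<and>
     (\<forall>c. \<forall>x\<in>C. map ((*) c) x \<in> C)"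

definition equivalent_codes :: "nat \<Rightarrow> 'a list set \<Rightarrow> 'a list set \<Rightarrow> bool" where
  "equivalent_codes n C D \<longleftrightarrow>
     (\<exists>\<sigma> \<pi>. \<sigma> permutes {0..<n} \<and> (\<forall>i<n. bij (\<pi> i)) \<and>
        D = (\<lambda>x. map (\<lambda>i. \<pi> i (x ! \<sigma> i)) [0..<n]) ` C)"

end

theory Submission
  imports Defs
begin

text \<open>A linear code with \<open>q\<^sup>n\<^sup>-\<^sup>2\<close> words and minimum distance 3 is the kernel of a
  \<open>2 \<times> n\<close> parity-check matrix whose columns are pairwise linearly independent, i.e. represent
  \<open>n\<close> distinct points of the projective line over \<open>F\<^sub>q\<close>, which has \<open>q + 1\<close> points.
  For \<open>n \<ge> q - 1\<close> at most two points are missed, and \<open>PGL(2, q)\<close> is 2-transitive, so some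
  projectivity maps the column set of one matrix onto that of the other. Hence the two
  parity-check matrices agree up to an invertible row operation, a permutation of the columns
  and a rescaling of each column, so the codes differ by a monomial transformation.\<close>

section \<open>The projective line and its projectivities\<close>

text \<open>The projective line over \<open>'a\<close> is modelled as \<open>'a option\<close>: \<open>Some t\<close> is \<open>[t : 1]\<close> and
  \<open>None\<close> is the point at infinity \<open>[1 : 0]\<close>. \<open>proj_x\<close>, \<open>proj_y\<close> give normalised
  homogeneous coordinates.\<close>

definition proj_point :: "'a::field \<Rightarrow> 'a \<Rightarrow> 'a option" where
  "proj_point x y = (if y = 0 then None else Some (x / y))"

definition proj_x :: "'a::field option \<Rightarrow> 'a" where
  "proj_x p = (case p of None \<Rightarrow> 1 | Some t \<Rightarrow> t)"

definition proj_y :: "'a::field option \<Rightarrow> 'a" where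
  "proj_y p = (case p of None \<Rightarrow> 0 | Some t \<Rightarrow> 1)"

definition moebius :: "'a::field \<Rightarrow> 'a \<Rightarrow> 'a \<Rightarrow> 'a \<Rightarrow> 'a option \<Rightarrow> 'a option" where
  "moebius a b c d p = proj_point (a * proj_x p + b * proj_y p) (c * proj_x p + d * proj_y p)"

lemma proj_point_eq_iff:
  fixes x1 y1 x2 y2 :: "'a::field"
  assumes "x1 \<noteq> 0 \<or> y1 \<noteq> 0" "x2 \<noteq> 0 \<or> y2 \<noteq> 0"
  shows "proj_point x1 y1 = proj_point x2 y2 \<longleftrightarrow> x1 * y2 = x2 * y1"
  using assms by (auto simp: proj_point_def field_simps)

lemma proj_coords_nonzero: "proj_x p \<noteq> 0 \<or> proj_y p \<noteq> 0"
  by (cases p) (auto simp: proj_x_def proj_y_def)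

lemma proj_point_coords: "proj_point (proj_x p) (proj_y p) = p"
  by (cases p) (auto simp: proj_x_def proj_y_def proj_point_def)

lemma proj_eq_iff_coords: "p = p' \<longleftrightarrow> proj_x p * proj_y p' = proj_x p' * proj_y p"
  using proj_point_eq_iff[OF proj_coords_nonzero proj_coords_nonzero, of p p']
  by (simp add: proj_point_coords)

lemma cross_product_linear_transform:
  fixes a b c d x1 y1 x2 y2 :: "'a::comm_ring"
  shows "(a * x1 + b * y1) * (c * x2 + d * y2) - (a * x2 + b * y2) * (c * x1 + d * y1)
    = (a * d - b * c) * (x1 * y2 - x2 * y1)"
  by (simp add: algebra_simps)

lemma linear_transform_nonzero:
  fixes a b c d x y :: "'a::field"
  assumes "a * d - b * c \<noteq> 0" "x \<noteq> 0 \<or> y \<noteq> 0"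
  shows "a * x + b * y \<noteq> 0 \<or> c * x + d * y \<noteq> 0"
proof (rule ccontr)
  assume "\<not> ?thesis"
  then have "a * x + b * y = 0" "c * x + d * y = 0" by auto
  moreover have "(a * d - b * c) * x = d * (a * x + b * y) - b * (c * x + d * y)"
    and "(a * d - b * c) * y = a * (c * x + d * y) - c * (a * x + b * y)"
    by (simp_all add: algebra_simps)
  ultimately show False using assms by auto
qed

lemma cross_eq_imp_proportional:
  fixes u1 u2 v1 v2 :: "'a::field"
  assumes "u1 \<noteq> 0 \<or> u2 \<noteq> 0" "v1 \<noteq> 0 \<or> v2 \<noteq> 0" "u1 * v2 = v1 * u2"
  shows "\<exists>e. e \<noteq> 0 \<and> v1 = e * u1 \<and> v2 = e * u2"
proof (cases "u1 = 0")
  case True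
  then show ?thesis using assms by (intro exI[of _ "v2 / u2"]) auto
next
  case False
  then show ?thesis using assms by (intro exI[of _ "v1 / u1"]) (auto simp: field_simps)
qed

lemma cross_eq_imp_dependent:
  fixes x1 y1 x2 y2 :: "'a::field"
  assumes "x1 * y2 = x2 * y1"
  shows "\<exists>a b. (a \<noteq> 0 \<or> b \<noteq> 0) \<and> a * x1 + b * x2 = 0 \<and> a * y1 + b * y2 = 0"
proof -
  consider "x1 \<noteq> 0 \<or> x2 \<noteq> 0" | "y1 \<noteq> 0 \<or> y2 \<noteq> 0" | "x1 = 0" "x2 = 0" "y1 = 0" "y2 = 0"
    by blast
  then show ?thesis
  proof cases
    case 1
    then show ?thesis using assms by (intro exI[of _ x2] exI[of _ "- x1"]) (auto simp: algebra_simps)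
  next
    case 2
    then show ?thesis using assms by (intro exI[of _ y2] exI[of _ "- y1"]) (auto simp: algebra_simps)
  next
    case 3
    then show ?thesis by (intro exI[of _ 1] exI[of _ 0]) simp
  qed
qed

lemma moebius_proj_point:
  fixes a b c d x y :: "'a::field"
  assumes "a * d - b * c \<noteq> 0" "x \<noteq> 0 \<or> y \<noteq> 0"
  shows "moebius a b c d (proj_point x y) = proj_point (a * x + b * y) (c * x + d * y)"
proof -
  let ?x = "proj_x (proj_point x y)" and ?y = "proj_y (proj_point x y)"
  have "proj_point ?x ?y = proj_point x y" by (simp add: proj_point_coords)
  then have "?x * y = x * ?y"
    using proj_point_eq_iff[OF proj_coords_nonzero assms(2)] by blast
  then have "(a * ?x + b * ?y) * (c * x + d * y) = (a * x + b * y) * (c * ?x + d * ?y)"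
    using cross_product_linear_transform[of a ?x b ?y c x d y] by simp
  then show ?thesis
    unfolding moebius_def
    using proj_point_eq_iff[OF linear_transform_nonzero[OF assms(1) proj_coords_nonzero]
        linear_transform_nonzero[OF assms]] by simp
qed

lemma moebius_inj:
  fixes a b c d :: "'a::field"
  assumes "a * d - b * c \<noteq> 0"
  shows "inj (moebius a b c d)"
proof (rule injI)
  fix p p' assume "moebius a b c d p = moebius a b c d p'"
  then have "(a * d - b * c) * (proj_x p * proj_y p' - proj_x p' * proj_y p) = 0"
    unfolding moebius_def
    using proj_point_eq_iff[OF linear_transform_nonzero[OF assms proj_coords_nonzero]
        linear_transform_nonzero[OF assms proj_coords_nonzero]]
      cross_product_linear_transform[of a "proj_x p" b "proj_y p" c "proj_x p'" d "proj_y p'"]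
    by simp
  then show "p = p'" using assms by (simp add: proj_eq_iff_coords)
qed

text \<open>The coefficients solve the two linear systems sending the coordinate vectors of
  \<open>p1, p2\<close> to those of \<open>q1, q2\<close> (Cramer's rule).\<close>

lemma moebius_two_transitive:
  fixes p1 p2 q1 q2 :: "'a::field option"
  assumes "p1 \<noteq> p2" "q1 \<noteq> q2"
  shows "\<exists>a b c d. a * d - b * c \<noteq> 0 \<and> moebius a b c d p1 = q1 \<and> moebius a b c d p2 = q2"
proof -
  define u1 u2 w1 w2 where "u1 = proj_x p1" "u2 = proj_y p1" "w1 = proj_x p2" "w2 = proj_y p2"
  define v1 v2 z1 z2 where "v1 = proj_x q1" "v2 = proj_y q1" "z1 = proj_x q2" "z2 = proj_y q2"
  define \<delta> where "\<delta> = u1 * w2 - w1 * u2"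
  have "\<delta> \<noteq> 0"
    using assms(1) proj_eq_iff_coords[of p1 p2] by (simp add: \<delta>_def u1_u2_w1_w2_def)
  have "v1 * z2 - z1 * v2 \<noteq> 0"
    using assms(2) proj_eq_iff_coords[of q1 q2] by (simp add: v1_v2_z1_z2_def)
  define a b c d where "a = (v1 * w2 - z1 * u2) / \<delta>" "b = (z1 * u1 - v1 * w1) / \<delta>"
    "c = (v2 * w2 - z2 * u2) / \<delta>" "d = (z2 * u1 - v2 * w1) / \<delta>"
  have sys1: "a * u1 + b * u2 = v1" "c * u1 + d * u2 = v2"
   and sys2: "a * w1 + b * w2 = z1" "c * w1 + d * w2 = z2"
    unfolding a_b_c_d_def using \<open>\<delta> \<noteq> 0\<close>
    by (simp_all add: divide_simps \<delta>_def) (simp_all add: algebra_simps)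
  have "(a * d - b * c) * \<delta> = v1 * z2 - z1 * v2"
    using cross_product_linear_transform[of a u1 b u2 c w1 d w2] sys1 sys2 by (simp add: \<delta>_def)
  then have "a * d - b * c \<noteq> 0" using \<open>v1 * z2 - z1 * v2 \<noteq> 0\<close> by auto
  moreover have "moebius a b c d p1 = q1"
    using sys1 by (simp add: moebius_def u1_u2_w1_w2_def v1_v2_z1_z2_def proj_point_coords)
  moreover have "moebius a b c d p2 = q2"
    using sys2 by (simp add: moebius_def u1_u2_w1_w2_def v1_v2_z1_z2_def proj_point_coords)
  ultimately show ?thesis by blast
qed

lemma moebius_map_small_set:
  fixes A B :: "'a::field option set"
  assumes "card A = card B" "card A \<le> 2" "finite A" "finite B"
  shows "\<exists>a b c d. a * d - b * c \<noteq> 0 \<and> moebius a b c d ` A = B"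
proof -
  have "card A = 0 \<or> card A = 1 \<or> card A = 2" using assms(2) by linarith
  then consider "A = {}" | "card A = 1" | "card A = 2"
    using assms(3) by auto
  then show ?thesis
  proof cases
    case 1
    then have "B = {}" using assms by auto
    then show ?thesis using 1 by (intro exI[of _ 1] exI[of _ 0]) auto
  next
    case 2
    then obtain p q where "A = {p}" "B = {q}" using assms by (metis card_1_singletonE)
    moreover obtain p' q' :: "'a option" where "p' \<noteq> p" "q' \<noteq> q"
      by (metis option.distinct(1))
    ultimately show ?thesis using moebius_two_transitive[of p p' q q'] by auto
  next
    case 3
    then obtain p1 p2 q1 q2 where "A = {p1, p2}" "p1 \<noteq> p2" "B = {q1, q2}" "q1 \<noteq> q2"
      using assms by (metis card_2_iff)
    then show ?thesis using moebius_two_transitive[of p1 p2 q1 q2] by auto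
  qed
qed

lemma inj_image_reindex:
  assumes "inj_on P I" "inj_on Q I" "inj \<tau>" "\<tau> ` P ` I = Q ` I"
  shows "\<exists>\<sigma>. \<sigma> permutes I \<and> (\<forall>i\<in>I. \<tau> (P (\<sigma> i)) = Q i)"
proof -
  have bij: "bij_betw (\<tau> \<circ> P) I (Q ` I)"
    using assms by (simp add: bij_betw_def image_comp comp_inj_on inj_on_subset)
  define \<sigma> where "\<sigma> i = (if i \<in> I then inv_into I (\<tau> \<circ> P) (Q i) else i)" for i
  have "bij_betw (inv_into I (\<tau> \<circ> P) \<circ> Q) I I"
    using bij_betw_trans[OF inj_on_imp_bij_betw[OF assms(2)] bij_betw_inv_into[OF bij]] .
  then have "bij_betw \<sigma> I I"
    by (rule bij_betw_cong[THEN iffD1, rotated]) (simp add: \<sigma>_def)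
  then have "\<sigma> permutes I"
    by (rule bij_imp_permutes) (simp add: \<sigma>_def)
  moreover have "\<tau> (P (\<sigma> i)) = Q i" if "i \<in> I" for i
    using that assms(4) f_inv_into_f[of "Q i" "\<tau> \<circ> P" I] by (auto simp: \<sigma>_def image_comp)
  ultimately show ?thesis by blast
qed

lemma moebius_match_points:
  fixes P Q :: "'i \<Rightarrow> 'a::{finite,field} option"
  assumes "inj_on P I" "inj_on Q I" "CARD('a) \<le> card I + 1"
  shows "\<exists>a b c d \<sigma>. a * d - b * c \<noteq> 0 \<and> \<sigma> permutes I \<and> (\<forall>i\<in>I. moebius a b c d (P (\<sigma> i)) = Q i)"
proof -
  have "finite I" using finite_imageD[OF _ assms(1)] by simp
  define A B where "A = - P ` I" "B = - Q ` I"
  have "card A = CARD('a) + 1 - card I" "card B = CARD('a) + 1 - card I"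
    using card_image[OF assms(1)] card_image[OF assms(2)]
    by (simp_all add: A_B_def Compl_eq_Diff_UNIV card_Diff_subset)
  moreover have "card A \<le> 2" using \<open>card A = _\<close> assms(3) by linarith
  ultimately obtain a b c d where det: "a * d - b * c \<noteq> 0" and AB: "moebius a b c d ` A = B"
    using moebius_map_small_set[of A B] by auto
  have "bij (moebius a b c d)"
    using moebius_inj[OF det] finite_UNIV_inj_surj[OF _ moebius_inj[OF det]] by (simp add: bij_def)
  then have "moebius a b c d ` P ` I = Q ` I"
    using bij_image_Compl_eq[of "moebius a b c d" A] AB by (simp add: A_B_def)
  then show ?thesis
    using inj_image_reindex[OF assms(1,2) moebius_inj[OF det]] det by blast
qed

section \<open>Parity-check matrices with two rows\<close>

definition pairwise_independent_columns :: "nat \<Rightarrow> (nat \<Rightarrow> 'a::field) \<Rightarrow> (nat \<Rightarrow> 'a) \<Rightarrow> bool" where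
  "pairwise_independent_columns n h1 h2 \<longleftrightarrow>
     (\<forall>i<n. \<forall>j<n. i \<noteq> j \<longrightarrow> h1 i * h2 j \<noteq> h1 j * h2 i)"

lemma pairwise_independent_columns_nonzero:
  assumes "pairwise_independent_columns n h1 h2" "2 \<le> n" "j < n"
  shows "h1 j \<noteq> 0 \<or> h2 j \<noteq> 0"
proof -
  let ?k = "if j = 0 then 1 else 0"
  have "?k < n" "?k \<noteq> j" using assms(2) by auto
  then show ?thesis
    using assms(1,3) unfolding pairwise_independent_columns_def by (metis mult_zero_left mult_zero_right)
qed

lemma pairwise_independent_columns_proj_inj:
  assumes "pairwise_independent_columns n h1 h2" "2 \<le> n"
  shows "inj_on (\<lambda>j. proj_point (h1 j) (h2 j)) {..<n}"
proof (rule inj_onI)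
  fix i j assume "i \<in> {..<n}" "j \<in> {..<n}" "proj_point (h1 i) (h2 i) = proj_point (h1 j) (h2 j)"
  then show "i = j"
    using assms(1) proj_point_eq_iff[OF pairwise_independent_columns_nonzero[OF assms]
        pairwise_independent_columns_nonzero[OF assms], of i j]
    unfolding pairwise_independent_columns_def by auto
qed

lemma pairwise_independent_columns_match:
  fixes h1 h2 g1 g2 :: "nat \<Rightarrow> 'a::{finite,field}"
  assumes "2 \<le> n" "CARD('a) \<le> n + 1"
    and h: "pairwise_independent_columns n h1 h2" and g: "pairwise_independent_columns n g1 g2"
  shows "\<exists>\<sigma> s a b c d. \<sigma> permutes {..<n} \<and> (\<forall>i<n. s i \<noteq> 0 \<and>
     s i * g1 i = a * h1 (\<sigma> i) + b * h2 (\<sigma> i) \<and> s i * g2 i = c * h1 (\<sigma> i) + d * h2 (\<sigma> i))"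
proof -
  obtain a b c d \<sigma> where det: "a * d - b * c \<noteq> 0" and perm: "\<sigma> permutes {..<n}"
    and match: "\<forall>i<n. moebius a b c d (proj_point (h1 (\<sigma> i)) (h2 (\<sigma> i))) = proj_point (g1 i) (g2 i)"
  proof -
    have "CARD('a) \<le> card {..<n} + 1" using assms(2) by simp
    from moebius_match_points[OF pairwise_independent_columns_proj_inj[OF h assms(1)]
        pairwise_independent_columns_proj_inj[OF g assms(1)] this]
    show ?thesis using that by auto
  qed
  have "\<exists>s. s \<noteq> 0 \<and> s * g1 i = a * h1 (\<sigma> i) + b * h2 (\<sigma> i) \<and> s * g2 i = c * h1 (\<sigma> i) + d * h2 (\<sigma> i)"
    if "i < n" for i
  proof -
    have "\<sigma> i < n" using permutes_in_image[OF perm] that by simp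
    note h_nz = pairwise_independent_columns_nonzero[OF h assms(1) this]
    note g_nz = pairwise_independent_columns_nonzero[OF g assms(1) that]
    have "(a * h1 (\<sigma> i) + b * h2 (\<sigma> i)) * g2 i = g1 i * (c * h1 (\<sigma> i) + d * h2 (\<sigma> i))"
      using match that moebius_proj_point[OF det h_nz]
        proj_point_eq_iff[OF linear_transform_nonzero[OF det h_nz] g_nz] by simp
    then show ?thesis
      using cross_eq_imp_proportional[OF g_nz linear_transform_nonzero[OF det h_nz]] by auto
  qed
  then obtain s where "\<forall>i<n. s i \<noteq> 0 \<and> s i * g1 i = a * h1 (\<sigma> i) + b * h2 (\<sigma> i) \<and>
      s i * g2 i = c * h1 (\<sigma> i) + d * h2 (\<sigma> i)"
    by metis
  then show ?thesis using perm by blast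
qed

section \<open>Linear codes of minimum distance 3 and redundancy 2\<close>

definition lin_form :: "nat \<Rightarrow> (nat \<Rightarrow> 'a::comm_ring) \<Rightarrow> 'a list \<Rightarrow> 'a" where
  "lin_form n w x = (\<Sum>j<n. x ! j * w j)"

definition parity_kernel :: "nat \<Rightarrow> (nat \<Rightarrow> 'a::comm_ring) \<Rightarrow> (nat \<Rightarrow> 'a) \<Rightarrow> 'a list set" where
  "parity_kernel n h1 h2 = {x \<in> words n. lin_form n h1 x = 0 \<and> lin_form n h2 x = 0}"

lemma lin_form_add:
  "length x = n \<Longrightarrow> length y = n \<Longrightarrow> lin_form n w (map2 (+) x y) = lin_form n w x + lin_form n w y"
  unfolding lin_form_def by (simp add: sum.distrib[symmetric] algebra_simps)

lemma lin_form_scale: "length x = n \<Longrightarrow> lin_form n w (map ((*) c) x) = c * lin_form n w x"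
  unfolding lin_form_def by (simp add: sum_distrib_left algebra_simps)

lemma lin_form_zero [simp]: "lin_form n w (replicate n 0) = 0"
  unfolding lin_form_def by simp

lemma hamming_dist_le_card:
  assumes "finite S" "\<forall>i<length x. i \<notin> S \<longrightarrow> x ! i = y ! i"
  shows "hamming_dist x y \<le> card S"
  unfolding hamming_dist_def using assms by (intro card_mono) auto

lemma hamming_dist_le_length: "hamming_dist x y \<le> length x"
  using hamming_dist_le_card[of "{..<length x}" x y] by simp

lemma finite_words: "finite (words m :: 'a::finite list set)"
  using finite_lists_length_eq[of "UNIV :: 'a set" m] by (simp add: words_def)

lemma card_words: "card (words m :: 'a::finite list set) = CARD('a) ^ m"
  using card_lists_length_eq[of "UNIV :: 'a set" m] by (simp add: words_def)

lemma inj_on_take_if_dist_gt: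
  assumes "C \<subseteq> words n" "\<forall>x\<in>C. \<forall>y\<in>C. x \<noteq> y \<longrightarrow> n - m < hamming_dist x y"
  shows "inj_on (take m) C"
proof (rule inj_onI)
  fix x y assume xy: "x \<in> C" "y \<in> C" "take m x = take m y"
  have "hamming_dist x y \<le> card {m..<n}"
  proof (rule hamming_dist_le_card)
    show "\<forall>i<length x. i \<notin> {m..<n} \<longrightarrow> x ! i = y ! i"
    proof (intro allI impI)
      fix i assume "i < length x" "i \<notin> {m..<n}"
      then have "i < m" using xy(1) assms(1) by (auto simp: words_def)
      then show "x ! i = y ! i" using xy(3) nth_take[of i m x] nth_take[of i m y] by simp
    qed
  qed simp
  then have "\<not> n - m < hamming_dist x y" by simp
  then show "x = y" using assms(2) xy(1,2) by blast
qed

lemma take_image_eq_words: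
  fixes C :: "'a::finite list set"
  assumes "C \<subseteq> words n" "m \<le> n" "inj_on (take m) C" "card C = CARD('a) ^ m"
  shows "take m ` C = words m"
proof (rule card_subset_eq[OF finite_words])
  show "take m ` C \<subseteq> words m" using assms(1,2) by (auto simp: words_def)
  show "card (take m ` C) = card (words m :: 'a list set)"
    using assms(3,4) by (simp add: card_image card_words)
qed

text \<open>A linear form vanishing on the codewords \<open>c k\<close> that reduce to the unit vectors
  vanishes on the whole code: subtracting multiples of \<open>c k\<close> clears the first \<open>m\<close>
  coordinates one at a time, and a codeword with \<open>m\<close> leading zeros is zero.\<close>

lemma lin_form_vanishes_on_linear_code:
  assumes lin: "linear_code n C" and inj: "inj_on (take m) C" and "m \<le> n"
    and basis: "\<And>k. k < m \<Longrightarrow> c k \<in> C \<and> take m (c k) = (replicate m 0)[k := 1]"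
    and w: "\<And>k. k < m \<Longrightarrow> lin_form n w (c k) = 0"
    and "x \<in> C"
  shows "lin_form n w x = 0"
proof -
  have len: "length y = n" if "y \<in> C" for y
    using lin that by (auto simp: linear_code_def words_def)
  have basis_nth: "c k ! i = (if i = k then 1 else 0)" if "k < m" "i < m" for k i
    using basis[OF that(1)] that by (metis length_replicate nth_list_update nth_replicate nth_take)
  have "\<forall>x\<in>C. (\<forall>i. k \<le> i \<and> i < m \<longrightarrow> x ! i = 0) \<longrightarrow> lin_form n w x = 0" for k
  proof (induction k)
    case 0
    have "x = replicate n 0" if "x \<in> C" "\<forall>i<m. x ! i = 0" for x
    proof (rule inj_onD[OF inj])
      show "take m x = take m (replicate n 0)"
        using that len[OF that(1)] by (intro nth_equalityI) auto
    qed (use lin that in \<open>auto simp: linear_code_def\<close>)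
    then show ?case by (metis le0 lin_form_zero)
  next
    case (Suc k)
    show ?case
    proof (intro ballI impI)
      fix x assume x: "x \<in> C" "\<forall>i. Suc k \<le> i \<and> i < m \<longrightarrow> x ! i = 0"
      show "lin_form n w x = 0"
      proof (cases "k < m")
        case False
        then show ?thesis using Suc.IH x by auto
      next
        case True
        define x' where "x' = map2 (+) x (map ((*) (- x ! k)) (c k))"
        have lens: "length x = n" "length (c k) = n" using len x(1) basis True by auto
        have "x' \<in> C"
          using lin x(1) basis[OF True] unfolding x'_def linear_code_def by blast
        moreover have "\<forall>i. k \<le> i \<and> i < m \<longrightarrow> x' ! i = 0"
        proof (intro allI impI)
          fix i assume i: "k \<le> i \<and> i < m"
          then have "x' ! i = x ! i - x ! k * c k ! i" using lens \<open>m \<le> n\<close> by (simp add: x'_def)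
          then show "x' ! i = 0" using basis_nth[OF True, of i] x(2) i by (cases "i = k") auto
        qed
        ultimately have "lin_form n w x' = 0" using Suc.IH by blast
        moreover have "lin_form n w x' = lin_form n w x - x ! k * lin_form n w (c k)"
          using lens by (simp add: x'_def lin_form_add lin_form_scale)
        ultimately show ?thesis using w[OF True] by simp
      qed
    qed
  qed
  from this[of m] show ?thesis using \<open>x \<in> C\<close> by auto
qed

text \<open>A linear code of length \<open>m + 2\<close> in which the first \<open>m\<close> coordinates are information
  symbols is the kernel of the systematic parity-check matrix \<open>[A | -I]\<close>, where row \<open>k\<close> of
  the \<open>m \<times> 2\<close> matrix \<open>A\<close> holds the check symbols of the codeword \<open>c k\<close> starting with the \<open>k\<close>-th
  unit vector.\<close>

lemma linear_code_eq_parity_kernel: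
  fixes C :: "'a::field list set"
  assumes lin: "linear_code n C" and "n = m + 2"
    and inj: "inj_on (take m) C" and surj: "take m ` C = words m"
  shows "\<exists>h1 h2. C = parity_kernel n h1 h2"
proof -
  have "\<exists>x. x \<in> C \<and> take m x = (replicate m 0)[k := 1]" for k
  proof -
    have "(replicate m 0)[k := 1] \<in> take m ` C" using surj by (simp add: words_def)
    then show ?thesis by (rule imageE) auto
  qed
  then obtain c where basis: "\<And>k. c k \<in> C \<and> take m (c k) = (replicate m 0)[k := 1]"
    by metis
  have basis_nth: "c k ! i = (if i = k then 1 else 0)" if "k < m" "i < m" for k i
    using basis[of k] that by (metis length_replicate nth_list_update nth_replicate nth_take)
  define h1 where "h1 j = (if j < m then c j ! m else if j = m then -1 else 0)" for j
  define h2 where "h2 j = (if j < m then c j ! Suc m else if j = m then 0 else -1)" for j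
  have split: "lin_form n w x = (\<Sum>j<m. x ! j * w j) + x ! m * w m + x ! Suc m * w (Suc m)"
    for w and x :: "'a list"
    using \<open>n = m + 2\<close> by (simp add: lin_form_def numeral_2_eq_2)
  have h1_eq: "lin_form n h1 x = (\<Sum>j<m. x ! j * c j ! m) - x ! m" for x
    unfolding split by (simp add: h1_def)
  have h2_eq: "lin_form n h2 x = (\<Sum>j<m. x ! j * c j ! Suc m) - x ! Suc m" for x
    unfolding split by (simp add: h2_def)
  have basis_sum: "(\<Sum>j<m. c k ! j * f j) = f k" if "k < m" for k f
  proof -
    have "(\<Sum>j<m. c k ! j * f j) = (\<Sum>j<m. if j = k then f j else 0)"
      using that by (intro sum.cong) (auto simp: basis_nth)
    then show ?thesis using that by simp
  qed
  have vanish: "lin_form n w x = 0"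
    if "x \<in> C" "\<And>k. k < m \<Longrightarrow> lin_form n w (c k) = 0" for w x
    using lin_form_vanishes_on_linear_code[OF lin inj _ basis] that \<open>n = m + 2\<close> by simp
  have "lin_form n h1 x = 0 \<and> lin_form n h2 x = 0" if "x \<in> C" for x
    by (intro conjI vanish[OF that]) (simp_all add: h1_eq h2_eq basis_sum)
  then have sub: "C \<subseteq> parity_kernel n h1 h2"
    using lin by (auto simp: parity_kernel_def linear_code_def)
  have "inj_on (take m) (parity_kernel n h1 h2)"
  proof (rule inj_onI)
    fix x y assume "x \<in> parity_kernel n h1 h2" "y \<in> parity_kernel n h1 h2"
      and take_eq: "take m x = take m y"
    then have "length x = n" "length y = n"
      and "x ! m = (\<Sum>j<m. x ! j * c j ! m)" "x ! Suc m = (\<Sum>j<m. x ! j * c j ! Suc m)"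
      and "y ! m = (\<Sum>j<m. y ! j * c j ! m)" "y ! Suc m = (\<Sum>j<m. y ! j * c j ! Suc m)"
      by (auto simp: parity_kernel_def words_def h1_eq h2_eq)
    moreover have "x ! j = y ! j" if "j < m" for j
      using take_eq that by (metis nth_take)
    ultimately show "x = y"
      using \<open>n = m + 2\<close> by (intro nth_equalityI) (auto simp: less_Suc_eq)
  qed
  moreover have "take m ` parity_kernel n h1 h2 \<subseteq> take m ` C"
    using surj \<open>n = m + 2\<close> by (auto simp: parity_kernel_def words_def)
  ultimately have "C = parity_kernel n h1 h2"
    using sub inj_on_image_eq_iff[of "take m" "parity_kernel n h1 h2" C] by blast
  then show ?thesis by blast
qed

lemma pairwise_independent_columns_if_weight_ge_3:
  assumes "\<forall>x\<in>parity_kernel n h1 h2. x \<noteq> replicate n 0 \<longrightarrow> 3 \<le> hamming_dist x (replicate n 0)"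
  shows "pairwise_independent_columns n h1 h2"
  unfolding pairwise_independent_columns_def
proof (intro allI impI notI)
  fix i j assume ij: "i < n" "j < n" "i \<noteq> j" and dep: "h1 i * h2 j = h1 j * h2 i"
  obtain a b where ab: "a \<noteq> 0 \<or> b \<noteq> 0" "a * h1 i + b * h1 j = 0" "a * h2 i + b * h2 j = 0"
    using cross_eq_imp_dependent[OF dep] by blast
  define z :: "'a list" where "z = map (\<lambda>k. if k = i then a else if k = j then b else 0) [0..<n]"
  have "lin_form n w z = a * w i + b * w j" for w
  proof -
    have "lin_form n w z = (\<Sum>k<n. (if k = i then a * w k else 0) + (if k = j then b * w k else 0))"
      unfolding lin_form_def z_def using ij by (intro sum.cong) auto
    then show ?thesis using ij by (simp add: sum.distrib)
  qed
  then have "z \<in> parity_kernel n h1 h2" using ab by (simp add: parity_kernel_def words_def z_def)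
  moreover have "z \<noteq> replicate n 0"
  proof
    assume "z = replicate n 0"
    then have "z ! i = 0" "z ! j = 0" using ij by auto
    then show False using ab ij by (auto simp: z_def)
  qed
  ultimately have "3 \<le> hamming_dist z (replicate n 0)" using assms by blast
  moreover have "hamming_dist z (replicate n 0) \<le> card {i, j}"
    by (rule hamming_dist_le_card) (auto simp: z_def)
  ultimately show False using ij(3) by simp
qed

lemma linear_code_dist_3_parity_check:
  fixes C :: "'a::{finite,field} list set"
  assumes lin: "linear_code n C" and code: "is_code n (CARD('a) ^ (n - 2)) 3 C"
  shows "3 \<le> n \<and> (\<exists>h1 h2. pairwise_independent_columns n h1 h2 \<and> C = parity_kernel n h1 h2)"
proof -
  have words: "C \<subseteq> words n" and card: "card C = CARD('a) ^ (n - 2)"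
    and dist: "\<forall>x\<in>C. \<forall>y\<in>C. x \<noteq> y \<longrightarrow> 3 \<le> hamming_dist x y"
    using code unfolding is_code_def by auto
  obtain x y where "x \<in> C" "hamming_dist x y = 3"
    using code unfolding is_code_def by blast
  then have "3 \<le> n" using words hamming_dist_le_length[of x y] by (auto simp: words_def)
  define m where "m = n - 2"
  have n: "n = m + 2" using \<open>3 \<le> n\<close> by (simp add: m_def)
  have "\<forall>x\<in>C. \<forall>y\<in>C. x \<noteq> y \<longrightarrow> n - m < hamming_dist x y"
    using dist n by (metis Suc_le_eq add_diff_cancel_left' add.commute numeral_2_eq_2 numeral_3_eq_3)
  then have inj: "inj_on (take m) C" by (rule inj_on_take_if_dist_gt[OF words])
  then have "take m ` C = words m"
    using take_image_eq_words[OF words _ inj] card by (simp add: m_def)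
  then obtain h1 h2 where C: "C = parity_kernel n h1 h2"
    using linear_code_eq_parity_kernel[OF lin n inj] by blast
  moreover have "replicate n 0 \<in> C" using lin by (simp add: linear_code_def)
  ultimately have "pairwise_independent_columns n h1 h2"
    using dist by (intro pairwise_independent_columns_if_weight_ge_3) auto
  then show ?thesis using \<open>3 \<le> n\<close> C by blast
qed

section \<open>Monomial equivalence\<close>

definition monomial_map :: "nat \<Rightarrow> (nat \<Rightarrow> nat) \<Rightarrow> (nat \<Rightarrow> 'a::field) \<Rightarrow> 'a list \<Rightarrow> 'a list" where
  "monomial_map n \<sigma> s x = map (\<lambda>i. s i * x ! \<sigma> i) [0..<n]"

lemma length_monomial_map [simp]: "length (monomial_map n \<sigma> s x) = n"
  by (simp add: monomial_map_def)

lemma equivalent_codes_monomial_image: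
  assumes "\<sigma> permutes {..<n}" "\<forall>i<n. s i \<noteq> 0"
  shows "equivalent_codes n C (monomial_map n \<sigma> s ` C)"
proof -
  have "bij ((*) (s i))" if "i < n" for i
    using assms(2) that by (intro o_bij[of "\<lambda>t. t / s i"]) (auto simp: fun_eq_iff)
  then show ?thesis
    using assms(1) unfolding equivalent_codes_def monomial_map_def
    by (intro exI[of _ \<sigma>] exI[of _ "\<lambda>i. (*) (s i)"]) (simp add: atLeast0LessThan)
qed

lemma inj_on_monomial_map:
  assumes "\<sigma> permutes {..<n}" "\<forall>i<n. s i \<noteq> 0"
  shows "inj_on (monomial_map n \<sigma> s) (words n)"
proof (rule inj_onI)
  fix x y assume "x \<in> words n" "y \<in> words n" and eq: "monomial_map n \<sigma> s x = monomial_map n \<sigma> s y"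
  then have len: "length x = n" "length y = n" by (auto simp: words_def)
  have "x ! \<sigma> i = y ! \<sigma> i" if "i < n" for i
    using arg_cong[OF eq, of "\<lambda>z. z ! i"] assms(2) that by (simp add: monomial_map_def)
  show "x = y"
  proof (rule nth_equalityI)
    show "length x = length y" using len by simp
    fix j assume "j < length x"
    then have "j \<in> \<sigma> ` {..<n}" using permutes_image[OF assms(1)] len by simp
    then show "x ! j = y ! j" using \<open>\<And>i. i < n \<Longrightarrow> x ! \<sigma> i = y ! \<sigma> i\<close> by auto
  qed
qed

lemma lin_form_monomial_map:
  assumes "\<sigma> permutes {..<n}" "\<forall>i<n. s i * g i = a * h1 (\<sigma> i) + b * h2 (\<sigma> i)"
  shows "lin_form n g (monomial_map n \<sigma> s x) = a * lin_form n h1 x + b * lin_form n h2 x"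
proof -
  have "lin_form n g (monomial_map n \<sigma> s x) = (\<Sum>i<n. x ! \<sigma> i * (s i * g i))"
    unfolding lin_form_def monomial_map_def by (simp add: algebra_simps)
  also have "\<dots> = (\<Sum>i<n. x ! \<sigma> i * (a * h1 (\<sigma> i) + b * h2 (\<sigma> i)))"
    using assms(2) by simp
  also have "\<dots> = (\<Sum>j<n. x ! j * (a * h1 j + b * h2 j))"
    using sum.permute[OF assms(1), of "\<lambda>j. x ! j * (a * h1 j + b * h2 j)"] by (simp add: comp_def)
  also have "\<dots> = a * lin_form n h1 x + b * lin_form n h2 x"
    unfolding lin_form_def by (simp add: sum_distrib_left sum.distrib algebra_simps)
  finally show ?thesis .
qed

theorem lemma5:
  fixes C D :: "'a::{finite,field} list set" and q n :: nat
  assumes "CARD('a) = q"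
    and "\<exists>p k. prime p \<and> 0 < k \<and> q = p ^ k"
    and "n \<in> {q - 1, q, q + 1}"
    and "linear_code n C" and "is_code n (q ^ (n - 2)) 3 C"
    and "linear_code n D" and "is_code n (q ^ (n - 2)) 3 D"
  shows "equivalent_codes n C D"
proof -
  obtain h1 h2 where "3 \<le> n" and h: "pairwise_independent_columns n h1 h2"
    and C: "C = parity_kernel n h1 h2"
    using linear_code_dist_3_parity_check[of n C] assms(1,4,5) by auto
  obtain g1 g2 where g: "pairwise_independent_columns n g1 g2" and D: "D = parity_kernel n g1 g2"
    using linear_code_dist_3_parity_check[of n D] assms(1,6,7) by auto
  have "2 \<le> n" "CARD('a) \<le> n + 1" using \<open>3 \<le> n\<close> assms(1,3) by auto
  then obtain \<sigma> s a b c d where \<sigma>: "\<sigma> permutes {..<n}" and rows: "\<forall>i<n. s i \<noteq> 0 \<and>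
      s i * g1 i = a * h1 (\<sigma> i) + b * h2 (\<sigma> i) \<and> s i * g2 i = c * h1 (\<sigma> i) + d * h2 (\<sigma> i)"
    using pairwise_independent_columns_match[OF _ _ h g] by blast
  then have s: "\<forall>i<n. s i \<noteq> 0" by blast
  have "lin_form n g1 (monomial_map n \<sigma> s x) = a * lin_form n h1 x + b * lin_form n h2 x"
    and "lin_form n g2 (monomial_map n \<sigma> s x) = c * lin_form n h1 x + d * lin_form n h2 x" for x
    using rows by (auto intro!: lin_form_monomial_map[OF \<sigma>])
  then have "monomial_map n \<sigma> s ` C \<subseteq> D"
    by (auto simp: C D parity_kernel_def words_def)
  moreover have "card (monomial_map n \<sigma> s ` C) = card D"
    using card_image[OF inj_on_subset[OF inj_on_monomial_map[OF \<sigma> s]]] assms(5,7)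
    by (simp add: C parity_kernel_def is_code_def)
  moreover have "finite D" using assms(7) by (simp add: is_code_def)
  ultimately have "D = monomial_map n \<sigma> s ` C" by (metis card_subset_eq)
  then show ?thesis using equivalent_codes_monomial_image[OF \<sigma> s, of C] by simp
qed

end
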